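(* Let $\varphi$ be a rule and $\mathbb{S}$ a pick-an-object mechanism that sequentializes $\varphi$, and let $h^A\in H^A_{\mathbb{S}}$ be any collective history of $\mathbb{S}$. Let $P\in\mathcal{P}$ be any preference profile, $\sigma^P$ the profile of straightforward strategies with respect to $P$, $a^*$ any agent, and $\sigma'$ any other strategy for $a^*$. Then there exist a set $I\subseteq O$, an ordering $\gamma$ of the elements of $I$, a preference $P^*\in\mathbb{P}$, and preferences $P'_{-a^*}$ of the agents other than $a^*$ such that $$\mathcal{O}_{a^*}|_{h^A}(\sigma^P_{a^*},\sigma^P_{-a^*})=\varphi_{a^*}\big(\gamma\oplus P_{a^*}|_{O\setminus I},\,P'_{-a^*}\big)$$ and $$\mathcal{O}_{a^*}|_{h^A}(\sigma',\sigma^P_{-a^*})=\varphi_{a^*}\big(\gamma\oplus P^*|_{O\setminus I},\,P'_{-a^*}\big).$$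
   Context: Let $A=\{a_1,\dots,a_n\}$ be a finite set of agents and $O=\{o_1,\dots,o_m\}\cup\{\emptyset\}$ a finite set of object types ($\emptyset$ the null object). Each agent has a strict preference over $O$; $\mathbb{P}$ is the set of strict preferences, $\mathcal{P}=\mathbb{P}^n$ the set of profiles. An allocation is $\mu:A\to O$; a rule $\varphi$ maps profiles to allocations, $\varphi_a(P)=\varphi(P)(a)$. For a preference $Q$ and a set $J\subseteq O$, $Q|_J$ is the ordering $Q$ restricted to $J$; for an ordering $\gamma$ of $I\subseteq O$, $\gamma\oplus Q|_{O\setminus I}$ is the preference ranking the elements of $I$ first in the order $\gamma$, followed by the elements of $O\setminus I$ in the order given by $Q$. PAO mechanisms: a choice history is a finite (possibly empty) sequence $((\Omega_1,\omega_1),\dots,(\Omega_k,\omega_k))$, $\Omega_j\subseteq O$, $\omega_j\in\Omega_j$, with last choice $\omega_k$. A collective history is an $n$-tuple of choice histories ($h^{A-\emptyset}$: all empty). A menu function $\mathbb{S}$ maps collective histories to $n$-tuples of subsets of $O$, with non-empty initial menus and, afterwards, agent $i$'s menu a subset of her last menu minus her last choice. The PAO mechanism $\mathbb{S}$: in period 1 every agent chooses from her initial menu; in each later period, given the current collective history $h^A$, if all menus in $\mathbb{S}(h^A)$ are empty the procedure stops and each agent receives her last choice; otherwise agents with non-empty menus choose an element; (menu, choice) is appended to each chooser's history. $H^A_{\mathbb{S}}$ is the set of collective histories that can arise. A strategy for agent $a$ maps each pair (own past history, current menu $\Omega$) to an element of $\Omega$. The straightforward strategy w.r.t. $P_a$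 always chooses the $P_a$-best element of the menu. $\mathbb{S}$ sequentializes $\varphi$ if straightforward play w.r.t. any $P$ yields $\varphi(P)$. For $h^A\in H^A_{\mathbb{S}}$ and a strategy profile $\sigma$, $\mathcal{O}_a|_{h^A}(\sigma)$ denotes agent $a$'s assignment when $\mathbb{S}$ is run starting from $h^A$ with agents following $\sigma$. *)

theory Defs
  imports Main
begin

text \<open>Objects: a finite type 'o (its elements are the object types, including the null object). A strict preference over O is represented as a list of all objects
without repetition, best first.\<close>

type_synonym 'o pref = "'o list"
type_synonym 'o choice_hist = "('o set \<times> 'o) list"
type_synonym ('ag, 'o) coll_hist = "'ag \<Rightarrow> 'o choice_hist"
type_synonym ('ag, 'o) menu_fun = "('ag, 'o) coll_hist \<Rightarrow> 'ag \<Rightarrow> 'o set"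
type_synonym 'o strategy = "'o choice_hist \<Rightarrow> 'o set \<Rightarrow> 'o"

definition is_pref :: "'o pref \<Rightarrow> bool" where
  "is_pref Q \<longleftrightarrow> distinct Q \<and> set Q = UNIV"

definition is_profile :: "('ag \<Rightarrow> 'o pref) \<Rightarrow> bool" where
  "is_profile P \<longleftrightarrow> (\<forall>a. is_pref (P a))"

definition restr :: "'o pref \<Rightarrow> 'o set \<Rightarrow> 'o list" where
  "restr Q J = filter (\<lambda>x. x \<in> J) Q"

definition is_ordering_of :: "'o list \<Rightarrow> 'o set \<Rightarrow> bool" where
  "is_ordering_of \<gamma> I \<longleftrightarrow> distinct \<gamma> \<and> set \<gamma> = I"

definition oplus_restr :: "'o list \<Rightarrow> 'o pref \<Rightarrow> 'o set \<Rightarrow> 'o pref" where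
  "oplus_restr \<gamma> Q I = \<gamma> @ restr Q (UNIV - I)"

definition empty_hist :: "('ag, 'o) coll_hist" where
  "empty_hist = (\<lambda>_. [])"

definition menu_function :: "('ag, 'o) menu_fun \<Rightarrow> bool" where
  "menu_function S \<longleftrightarrow>
     (\<forall>a. S empty_hist a \<noteq> {}) \<and>
     (\<forall>h a. h a \<noteq> [] \<longrightarrow> S h a \<subseteq> fst (last (h a)) - {snd (last (h a))})"

definition all_menus_empty :: "('ag, 'o) menu_fun \<Rightarrow> ('ag, 'o) coll_hist \<Rightarrow> bool" where
  "all_menus_empty S h \<longleftrightarrow> (\<forall>a. S h a = {})"

inductive_set histories :: "('ag, 'o) menu_fun \<Rightarrow> ('ag, 'o) coll_hist set"
  for S :: "('ag, 'o) menu_fun" where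
  init: "empty_hist \<in> histories S"
| ext: "\<lbrakk> h \<in> histories S; \<not> all_menus_empty S h;
          \<forall>a. S h a \<noteq> {} \<longrightarrow> c a \<in> S h a \<rbrakk>
        \<Longrightarrow> (\<lambda>a. if S h a = {} then h a else h a @ [(S h a, c a)]) \<in> histories S"

definition valid_strategy :: "'o strategy \<Rightarrow> bool" where
  "valid_strategy s \<longleftrightarrow> (\<forall>hh \<Omega>. \<Omega> \<noteq> {} \<longrightarrow> s hh \<Omega> \<in> \<Omega>)"

definition straightforward :: "'o pref \<Rightarrow> 'o strategy" where
  "straightforward Q hh \<Omega> = hd (filter (\<lambda>x. x \<in> \<Omega>) Q)"

definition step :: "('ag, 'o) menu_fun \<Rightarrow> ('ag \<Rightarrow> 'o strategy) \<Rightarrow> ('ag, 'o) coll_hist \<Rightarrow> ('ag, 'o) coll_hist" where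
  "step S \<sigma> h = (\<lambda>a. if S h a = {} then h a else h a @ [(S h a, \<sigma> a (h a) (S h a))])"

definition final_hist :: "('ag, 'o) menu_fun \<Rightarrow> ('ag \<Rightarrow> 'o strategy) \<Rightarrow> ('ag, 'o) coll_hist \<Rightarrow> ('ag, 'o) coll_hist" where
  "final_hist S \<sigma> h = (step S \<sigma> ^^ (LEAST n. all_menus_empty S ((step S \<sigma> ^^ n) h))) h"

definition outcome :: "('ag, 'o) menu_fun \<Rightarrow> ('ag \<Rightarrow> 'o strategy) \<Rightarrow> ('ag, 'o) coll_hist \<Rightarrow> 'ag \<Rightarrow> 'o" where
  "outcome S \<sigma> h a = snd (last (final_hist S \<sigma> h a))"

definition sequentializes :: "('ag, 'o) menu_fun \<Rightarrow> (('ag \<Rightarrow> 'o pref) \<Rightarrow> 'ag \<Rightarrow> 'o) \<Rightarrow> bool" where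
  "sequentializes S \<phi> \<longleftrightarrow>
     (\<forall>P. is_profile P \<longrightarrow> outcome S (\<lambda>a. straightforward (P a)) empty_hist = \<phi> P)"

end

theory Submission
  imports Defs
begin

text \<open>Along any history an agent's menus shrink and each choice is excluded from all later
menus. Hence if she ranks the objects chosen so far first, in the order chosen, and the rest as
under some Q, straightforward play reproduces her past choices and afterwards agrees with
straightforward play under Q. This applies to the history h, to the continuation of every agent
playing straightforwardly, and also to the continuation of a* under \<sigma>', which is straightforward
for the preference ranking its own choices first. Both runs from h thereby become straightforward
runs from the empty history, whose outcomes are given by \<phi> since S sequentializes \<phi>.\<close>

definition choice_chain :: "'o choice_hist \<Rightarrow> bool" where
  "choice_chain l \<longleftrightarrow> (\<forall>j<length l. snd (l!j) \<in> fst (l!j)) \<and>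
     (\<forall>j. Suc j < length l \<longrightarrow> fst (l!Suc j) \<subseteq> fst (l!j) - {snd (l!j)})"

definition follows_from :: "nat \<Rightarrow> 'o strategy \<Rightarrow> 'o choice_hist \<Rightarrow> bool" where
  "follows_from k s l \<longleftrightarrow> (\<forall>j. k \<le> j \<longrightarrow> j < length l \<longrightarrow> s (take j l) (fst (l!j)) = snd (l!j))"

definition choices_first :: "'o choice_hist \<Rightarrow> 'o pref \<Rightarrow> 'o pref" where
  "choices_first l Q = oplus_restr (map snd l) Q (set (map snd l))"

lemma choice_chain_menu_antimono:
  assumes "choice_chain l" "i \<le> j" "j < length l"
  shows "fst (l!j) \<subseteq> fst (l!i)"
  using assms(2,3)
proof (induction j rule: dec_induct)
  case (step j)
  then have "fst (l!Suc j) \<subseteq> fst (l!j)"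
    using assms(1) unfolding choice_chain_def by blast
  with step show ?case by simp
qed simp

lemma choice_chain_choice_notin_later_menu:
  assumes "choice_chain l" "i < j" "j < length l"
  shows "snd (l!i) \<notin> fst (l!j)"
proof -
  have "fst (l!j) \<subseteq> fst (l!Suc i)"
    using choice_chain_menu_antimono[OF assms(1)] assms(2,3) by simp
  moreover have "fst (l!Suc i) \<subseteq> fst (l!i) - {snd (l!i)}"
    using assms unfolding choice_chain_def by simp
  ultimately show ?thesis by blast
qed

lemma earlier_choices_notin_menu:
  assumes "choice_chain l" "j < length l" "x \<in> set (map snd (take j l))"
  shows "x \<notin> fst (l!j)"
  using assms choice_chain_choice_notin_later_menu[OF assms(1) _ assms(2)]
  by (auto simp: in_set_conv_nth) (metis snd_conv)

lemma choice_chain_distinct: "choice_chain l \<Longrightarrow> distinct (map snd l)"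
  unfolding distinct_conv_nth
  by (metis choice_chain_choice_notin_later_menu choice_chain_def length_map linorder_neqE_nat nth_map)

lemma choice_chain_drop: "choice_chain l \<Longrightarrow> choice_chain (drop k l)"
  unfolding choice_chain_def by (auto simp: add.commute[of k])

lemma is_pref_choices_first: "choice_chain l \<Longrightarrow> is_pref Q \<Longrightarrow> is_pref (choices_first l Q)"
  unfolding is_pref_def choices_first_def oplus_restr_def restr_def
  by (auto dest: choice_chain_distinct)

lemma valid_strategy_straightforward: "is_pref Q \<Longrightarrow> valid_strategy (straightforward Q)"
  unfolding valid_strategy_def straightforward_def is_pref_def
  by (metis (mono_tags) filter_empty_conv hd_in_set UNIV_I ex_in_conv mem_Collect_eq set_filter)

lemma follows_from_appendD: "follows_from k s (l @ r) \<Longrightarrow> follows_from k s l"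
  unfolding follows_from_def by (auto simp: nth_append)

lemma follows_from_append_straightforward:
  "follows_from 0 (straightforward Q) r \<Longrightarrow> follows_from (length l) (straightforward Q) (l @ r)"
  unfolding follows_from_def straightforward_def
  by (auto simp: nth_append dest: spec[of _ "_ - length l"])

lemma follows_from_choices_first:
  assumes chain: "choice_chain (l @ r)"
    and follows: "follows_from (length l) (straightforward Q) (l @ r)"
  shows "follows_from 0 (straightforward (choices_first l Q)) (l @ r)"
  unfolding follows_from_def
proof (intro allI impI)
  fix j assume "0 \<le> j" and j: "j < length (l @ r)"
  define L M xs where "L = l @ r" and "M = fst (L!j)" and "xs = map snd l"
  have earlier: "x \<notin> M" if "x \<in> set (map snd (take j L))" for x
    using earlier_choices_notin_menu[OF chain j] that unfolding M_def L_def by blast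
  have "straightforward (xs @ restr Q (UNIV - set xs)) (take j L) M = snd (L!j)"
  proof (cases "j < length l")
    case True
    have "xs = map snd (take j L) @ snd (L!j) # map snd (drop (Suc j) l)"
      using id_take_nth_drop[OF True] True unfolding xs_def L_def
      by (metis list.simps(9) map_append nth_append take_append diff_is_0_eq' less_imp_le_nat
          take0 append_Nil2)
    moreover have "snd (L!j) \<in> M"
      using chain j unfolding choice_chain_def M_def L_def by blast
    moreover have "filter (\<lambda>x. x \<in> M) (map snd (take j L)) = []"
      using earlier by (simp add: filter_empty_conv)
    ultimately show ?thesis
      by (simp add: straightforward_def)
  next
    case False
    then have "set xs \<subseteq> set (map snd (take j L))"
      unfolding xs_def L_def by simp
    with earlier have disjoint: "x \<notin> set xs" if "x \<in> M" for x
      using that by blast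
    have "filter (\<lambda>x. x \<in> M) (restr Q (UNIV - set xs)) = filter (\<lambda>x. x \<in> M) Q"
      unfolding restr_def filter_filter using disjoint by (metis (lifting) DiffI UNIV_I)
    moreover have "filter (\<lambda>x. x \<in> M) xs = []"
      using disjoint by (auto simp: filter_empty_conv)
    moreover have "straightforward Q (take j L) M = snd (L!j)"
      using follows False j unfolding follows_from_def M_def L_def by simp
    ultimately show ?thesis
      by (simp add: straightforward_def)
  qed
  then show "straightforward (choices_first l Q) (take j (l @ r)) (fst ((l @ r)!j)) = snd ((l @ r)!j)"
    unfolding choices_first_def oplus_restr_def L_def M_def xs_def .
qed

lemma step_in_histories:
  assumes "g \<in> histories S" "\<forall>b. valid_strategy (\<sigma> b)"
  shows "step S \<sigma> g \<in> histories S"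
proof (cases "all_menus_empty S g")
  case True
  then have "step S \<sigma> g = g" unfolding step_def all_menus_empty_def by auto
  with assms show ?thesis by simp
next
  case False
  have "(\<lambda>b. if S g b = {} then g b else g b @ [(S g b, (\<lambda>b. \<sigma> b (g b) (S g b)) b)])
      \<in> histories S"
    by (rule histories.ext) (use assms False in \<open>auto simp: valid_strategy_def\<close>)
  then show ?thesis unfolding step_def by simp
qed

lemma funpow_step_in_histories:
  "g \<in> histories S \<Longrightarrow> \<forall>b. valid_strategy (\<sigma> b) \<Longrightarrow> (step S \<sigma> ^^ m) g \<in> histories S"
  by (induction m) (auto intro: step_in_histories)

lemma choice_chain_snoc:
  assumes "choice_chain l" "c \<in> M" "l \<noteq> [] \<Longrightarrow> M \<subseteq> fst (last l) - {snd (last l)}"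
  shows "choice_chain (l @ [(M, c)])"
  unfolding choice_chain_def
proof (intro conjI allI impI)
  fix j assume "j < length (l @ [(M, c)])"
  then show "snd ((l @ [(M, c)]) ! j) \<in> fst ((l @ [(M, c)]) ! j)"
    using assms(1,2) unfolding choice_chain_def by (auto simp: nth_append less_Suc_eq)
next
  fix j assume j: "Suc j < length (l @ [(M, c)])"
  show "fst ((l @ [(M, c)]) ! Suc j) \<subseteq> fst ((l @ [(M, c)]) ! j) - {snd ((l @ [(M, c)]) ! j)}"
  proof (cases "Suc j = length l")
    case True
    then have "l \<noteq> []" by auto
    moreover from this have "last l = l ! j"
      using last_conv_nth[of l] True[symmetric] by simp
    moreover have "(l @ [(M, c)]) ! Suc j = (M, c)" "(l @ [(M, c)]) ! j = l ! j"
      using True by (simp_all add: nth_append)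
    ultimately show ?thesis using assms(3) by simp
  next
    case False
    with j assms(1) show ?thesis unfolding choice_chain_def by (simp add: nth_append)
  qed
qed

lemma histories_choice_chain:
  assumes "menu_function S" "g \<in> histories S"
  shows "choice_chain (g b)"
  using assms(2)
proof (induction g arbitrary: b rule: histories.induct)
  case init
  then show ?case by (simp add: empty_hist_def choice_chain_def)
next
  case (ext h c)
  have "choice_chain (h b @ [(S h b, c b)])" if "S h b \<noteq> {}"
    using ext that assms(1) unfolding menu_function_def by (blast intro: choice_chain_snoc)
  with ext.IH show ?case by simp
qed

lemma length_le_card_of_histories:
  fixes S :: "('ag, 'o::finite) menu_fun"
  assumes "menu_function S" "g \<in> histories S"
  shows "length (g b) \<le> card (UNIV :: 'o set)"
proof -
  have "length (g b) = card (set (map snd (g b)))"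
    using distinct_card[OF choice_chain_distinct[OF histories_choice_chain[OF assms]]] by simp
  also have "\<dots> \<le> card (UNIV :: 'o set)"
    by (rule card_mono) simp_all
  finally show ?thesis .
qed

lemma sum_length_step_gt:
  fixes S :: "('ag::finite, 'o) menu_fun"
  assumes "\<not> all_menus_empty S g"
  shows "(\<Sum>b\<in>UNIV. length (g b)) < (\<Sum>b\<in>UNIV. length (step S \<sigma> g b))"
proof (rule sum_strict_mono_ex1)
  show "\<forall>b\<in>UNIV. length (g b) \<le> length (step S \<sigma> g b)"
    by (simp add: step_def)
  show "\<exists>b\<in>UNIV. length (g b) < length (step S \<sigma> g b)"
    using assms by (auto simp: all_menus_empty_def step_def)
qed simp

lemma funpow_step_reaches_all_menus_empty:
  fixes S :: "('ag::finite, 'o::finite) menu_fun"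
  assumes "menu_function S" "g \<in> histories S" "\<forall>b. valid_strategy (\<sigma> b)"
  shows "\<exists>m. all_menus_empty S ((step S \<sigma> ^^ m) g)"
proof (rule ccontr)
  assume never: "\<nexists>m. all_menus_empty S ((step S \<sigma> ^^ m) g)"
  define len where "len m = (\<Sum>b\<in>UNIV. length ((step S \<sigma> ^^ m) g b))" for m
  have grows: "m \<le> len m" for m
  proof (induction m)
    case (Suc m)
    have "len m < len (Suc m)"
      unfolding len_def using sum_length_step_gt never by fastforce
    with Suc show ?case by simp
  qed simp
  define N where "N = card (UNIV :: 'ag set) * card (UNIV :: 'o set)"
  have bounded: "len m \<le> N" for m
    unfolding len_def N_def using sum_bounded_above[of UNIV "\<lambda>b. length ((step S \<sigma> ^^ m) g b)"]
      length_le_card_of_histories[OF assms(1) funpow_step_in_histories[OF assms(2,3)]] by simp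
  show False
    using grows[of "Suc N"] bounded[of "Suc N"] by simp
qed

lemma follows_from_step:
  assumes "follows_from k (\<sigma> b) (g b)"
  shows "follows_from k (\<sigma> b) (step S \<sigma> g b)"
  using assms unfolding follows_from_def step_def
  by (auto simp: nth_append less_Suc_eq)

lemma funpow_step_extends: "\<exists>r. (step S \<sigma> ^^ m) g b = g b @ r"
  by (induction m) (auto simp: step_def)

lemma follows_from_funpow_step: "follows_from (length (g b)) (\<sigma> b) ((step S \<sigma> ^^ m) g b)"
proof (induction m)
  case 0
  then show ?case by (simp add: follows_from_def)
next
  case (Suc m)
  then show ?case using follows_from_step by simp
qed

lemma final_hist_in_histories:
  "g \<in> histories S \<Longrightarrow> \<forall>b. valid_strategy (\<sigma> b) \<Longrightarrow> final_hist S \<sigma> g \<in> histories S"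
  unfolding final_hist_def by (rule funpow_step_in_histories)

lemma all_menus_empty_final_hist:
  fixes S :: "('ag::finite, 'o::finite) menu_fun"
  assumes "menu_function S" "g \<in> histories S" "\<forall>b. valid_strategy (\<sigma> b)"
  shows "all_menus_empty S (final_hist S \<sigma> g)"
  unfolding final_hist_def
  using funpow_step_reaches_all_menus_empty[OF assms] by (rule LeastI_ex)

lemma final_hist_extends: "\<exists>r. final_hist S \<sigma> g b = g b @ r"
  unfolding final_hist_def by (rule funpow_step_extends)

lemma follows_from_final_hist: "follows_from (length (g b)) (\<sigma> b) (final_hist S \<sigma> g b)"
  unfolding final_hist_def by (rule follows_from_funpow_step)

lemma funpow_step_from_empty_hist:
  assumes "g \<in> histories S" "\<forall>b. follows_from 0 (\<tau> b) (g b)"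
  shows "\<exists>n. (\<forall>k<n. \<not> all_menus_empty S ((step S \<tau> ^^ k) empty_hist)) \<and>
             (step S \<tau> ^^ n) empty_hist = g"
  using assms
proof (induction g rule: histories.induct)
  case init
  show ?case by (rule exI[of _ 0]) simp
next
  case (ext g c)
  define g' where "g' = (\<lambda>b. if S g b = {} then g b else g b @ [(S g b, c b)])"
  have appended: "follows_from 0 (\<tau> b) (g b @ (if S g b = {} then [] else [(S g b, c b)]))" for b
    using ext.prems[rule_format, of b] by (cases "S g b = {}") simp_all
  then have "\<forall>b. follows_from 0 (\<tau> b) (g b)"
    by (blast intro: follows_from_appendD)
  with ext.IH obtain n where n: "\<forall>k<n. \<not> all_menus_empty S ((step S \<tau> ^^ k) empty_hist)"
    "(step S \<tau> ^^ n) empty_hist = g" by blast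
  have "\<tau> b (g b) (S g b) = c b" if "S g b \<noteq> {}" for b
    using appended[of b] that unfolding follows_from_def
    by (auto dest: spec[of _ "length (g b)"])
  then have "step S \<tau> g = g'"
    unfolding step_def g'_def by auto
  with n(2) have "(step S \<tau> ^^ Suc n) empty_hist = g'"
    by simp
  moreover have "\<forall>k<Suc n. \<not> all_menus_empty S ((step S \<tau> ^^ k) empty_hist)"
    using n ext.hyps(2) by (auto simp: less_Suc_eq)
  ultimately show ?case
    unfolding g'_def by blast
qed

lemma final_hist_empty_hist_eq:
  assumes "g \<in> histories S" "all_menus_empty S g" "\<forall>b. follows_from 0 (\<tau> b) (g b)"
  shows "final_hist S \<tau> empty_hist = g"
proof -
  obtain n where n: "\<forall>k<n. \<not> all_menus_empty S ((step S \<tau> ^^ k) empty_hist)"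
    "(step S \<tau> ^^ n) empty_hist = g"
    using funpow_step_from_empty_hist[OF assms(1,3)] by blast
  then have "(LEAST k. all_menus_empty S ((step S \<tau> ^^ k) empty_hist)) = n"
    using assms(2) by (intro Least_equality) (auto simp: not_less[symmetric])
  with n show ?thesis
    unfolding final_hist_def by simp
qed

lemma final_hist_deviation_straightforward:
  assumes menus: "menu_function S" and h: "h \<in> histories S"
    and prefs: "\<forall>b. is_pref (P b)" and s: "valid_strategy s"
  obtains Q where "is_pref Q"
    "\<forall>b. follows_from (length (h b)) (straightforward ((P(a := Q)) b))
        (final_hist S ((\<lambda>b. straightforward (P b))(a := s)) h b)"
proof -
  define \<sigma> where "\<sigma> = (\<lambda>b. straightforward (P b))(a := s)"
  have "\<forall>b. valid_strategy (\<sigma> b)"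
    using prefs s unfolding \<sigma>_def by (auto intro: valid_strategy_straightforward)
  then have "choice_chain (final_hist S \<sigma> h a)"
    using histories_choice_chain[OF menus final_hist_in_histories[OF h]] by blast
  moreover obtain r where r: "final_hist S \<sigma> h a = h a @ r"
    using final_hist_extends[where g = h and b = a] by blast
  ultimately have "choice_chain r"
    using choice_chain_drop[of _ "length (h a)"] by (metis append_eq_conv_conj)
  moreover have "follows_from (length r) (straightforward (P a)) r"
    by (simp add: follows_from_def)
  ultimately have "follows_from 0 (straightforward (choices_first r (P a))) r"
    using follows_from_choices_first[of r "[]"] by simp
  then have "follows_from (length (h a)) (straightforward (choices_first r (P a)))
      (final_hist S \<sigma> h a)"
    unfolding r by (rule follows_from_append_straightforward)
  moreover have "follows_from (length (h b)) (straightforward (P b)) (final_hist S \<sigma> h b)"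
    if "b \<noteq> a" for b
    using follows_from_final_hist[where \<sigma> = \<sigma> and g = h and b = b] that unfolding \<sigma>_def by simp
  ultimately have "\<forall>b. follows_from (length (h b))
      (straightforward ((P(a := choices_first r (P a))) b)) (final_hist S \<sigma> h b)"
    by simp
  moreover have "is_pref (choices_first r (P a))"
    using is_pref_choices_first[OF \<open>choice_chain r\<close>] prefs by blast
  ultimately show ?thesis
    using that unfolding \<sigma>_def by blast
qed

lemma outcome_eq_sequentialized_rule:
  fixes S :: "('ag::finite, 'o::finite) menu_fun"
  assumes menus: "menu_function S" and seq: "sequentializes S \<phi>"
    and h: "h \<in> histories S" and valid: "\<forall>b. valid_strategy (\<sigma> b)"
    and prefs: "\<forall>b. is_pref (Q b)"
    and follows: "\<forall>b. follows_from (length (h b)) (straightforward (Q b)) (final_hist S \<sigma> h b)"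
  shows "outcome S \<sigma> h a = \<phi> (\<lambda>b. choices_first (h b) (Q b)) a"
proof -
  define F where "F = final_hist S \<sigma> h"
  define \<Pi> where "\<Pi> = (\<lambda>b. choices_first (h b) (Q b))"
  have F: "F \<in> histories S" "all_menus_empty S F"
    unfolding F_def using final_hist_in_histories[OF h valid]
      all_menus_empty_final_hist[OF menus h valid] by simp_all
  have "follows_from 0 (straightforward (\<Pi> b)) (F b)" for b
  proof -
    obtain r where r: "F b = h b @ r"
      unfolding F_def using final_hist_extends[where g = h and b = b] by blast
    show ?thesis
      using follows_from_choices_first[of "h b" r "Q b"]
        histories_choice_chain[OF menus F(1), of b] follows[rule_format, of b]
      unfolding r \<Pi>_def F_def[symmetric] by simp
  qed
  then have "final_hist S (\<lambda>b. straightforward (\<Pi> b)) empty_hist = F"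
    using F by (intro final_hist_empty_hist_eq) simp_all
  moreover have "is_profile \<Pi>"
    unfolding is_profile_def \<Pi>_def
    using is_pref_choices_first histories_choice_chain[OF menus h] prefs by blast
  then have "\<phi> \<Pi> = outcome S (\<lambda>b. straightforward (\<Pi> b)) empty_hist"
    using seq unfolding sequentializes_def by simp
  ultimately show ?thesis
    unfolding outcome_def F_def \<Pi>_def[symmetric] by simp
qed

theorem lemma1:
  fixes S :: "('ag::finite, 'o::finite) menu_fun"
    and \<phi> :: "('ag \<Rightarrow> 'o pref) \<Rightarrow> 'ag \<Rightarrow> 'o"
    and h :: "('ag, 'o) coll_hist"
    and P :: "'ag \<Rightarrow> 'o pref"
    and astar :: 'ag
    and \<sigma>' :: "'o strategy"
  assumes "menu_function S"
    and "sequentializes S \<phi>"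
    and "h \<in> histories S"
    and "is_profile P"
    and "valid_strategy \<sigma>'"
  shows "\<exists>I \<gamma> Pstar P'.
           is_ordering_of \<gamma> I \<and> is_pref Pstar \<and> (\<forall>b. b \<noteq> astar \<longrightarrow> is_pref (P' b)) \<and>
           outcome S (\<lambda>a. straightforward (P a)) h astar
             = \<phi> (P'(astar := oplus_restr \<gamma> (P astar) I)) astar \<and>
           outcome S ((\<lambda>a. straightforward (P a))(astar := \<sigma>')) h astar
             = \<phi> (P'(astar := oplus_restr \<gamma> Pstar I)) astar"
proof -
  define P' where "P' = (\<lambda>b. choices_first (h b) (P b))"
  define \<gamma> where "\<gamma> = map snd (h astar)"
  have prefs: "\<forall>b. is_pref (P b)"
    using assms(4) unfolding is_profile_def by blast
  have valid: "\<forall>b. valid_strategy (((\<lambda>a. straightforward (P a))(astar := s)) b)"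
    if "valid_strategy s" for s
    using prefs that by (auto intro: valid_strategy_straightforward)
  have profile: "(\<lambda>b. choices_first (h b) ((P(astar := Q)) b))
      = P'(astar := oplus_restr \<gamma> Q (set \<gamma>))" for Q
    unfolding P'_def \<gamma>_def choices_first_def by auto
  obtain Pstar where "is_pref Pstar" and deviation:
    "\<forall>b. follows_from (length (h b)) (straightforward ((P(astar := Pstar)) b))
        (final_hist S ((\<lambda>a. straightforward (P a))(astar := \<sigma>')) h b)"
    using final_hist_deviation_straightforward[OF assms(1,3) prefs assms(5)] by blast
  have "outcome S ((\<lambda>a. straightforward (P a))(astar := \<sigma>')) h astar
      = \<phi> (P'(astar := oplus_restr \<gamma> Pstar (set \<gamma>))) astar"
    using outcome_eq_sequentialized_rule[OF assms(1-3) valid[OF assms(5)] _ deviation]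
      prefs \<open>is_pref Pstar\<close> unfolding profile by simp
  moreover have "outcome S (\<lambda>a. straightforward (P a)) h astar = \<phi> P' astar"
    unfolding P'_def using prefs follows_from_final_hist[where \<sigma> = "\<lambda>a. straightforward (P a)"]
    by (intro outcome_eq_sequentialized_rule[OF assms(1-3) _ prefs])
      (simp_all add: valid_strategy_straightforward)
  moreover have "P'(astar := oplus_restr \<gamma> (P astar) (set \<gamma>)) = P'"
    using profile[of "P astar"] unfolding P'_def by simp
  moreover have "is_ordering_of \<gamma> (set \<gamma>)" "\<forall>b. is_pref (P' b)"
    using choice_chain_distinct histories_choice_chain[OF assms(1,3)] prefs is_pref_choices_first
    unfolding is_ordering_of_def \<gamma>_def P'_def by blast+
  ultimately show ?thesis
    using \<open>is_pref Pstar\<close>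
    by (intro exI[of _ "set \<gamma>"] exI[of _ \<gamma>] exI[of _ Pstar] exI[of _ P']) simp
qed

end
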